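(* Let $I$ be a resident-minimal instance and $J$ a simple extension of $I$. Then there is a simple and hospital-complete extension $J'$ of $I$ such that $\mathrm{rej}(J)\subseteq\mathrm{rej}(J')$.
   Context: An instance $I$ consists of finite disjoint sets $R$ (residents) and $H$ (hospitals), a positive integer quota $q_h$ for each $h\in H$, for each $r\in R$ a preference list of $r$ (a sequence of distinct members of $H$, not necessarily all), and for each $h\in H$ a preference list of $h$ (a sequence of distinct members of $R$). A list is complete if it contains every member of the opposite side; an instance is hospital-complete if every hospital's list is complete. A match is a pair $(r,h)\in R\times H$. For a set $M$ of matches, $\mathrm{res}_h M=\{r:(r,h)\in M\}$, $\mathrm{res}\,M=\{r:(r,h)\in M\text{ for some }h\}$. $J$ is an extension of $I$ (same $R,H$, quotas) if every list of $J$ has the corresponding list of $I$ as a prefix. An event is $(r,h)^+$ (proposal) or $(r,h)^-$ (rejection). For an event sequence $\sigma$, $\mathrm{prop}(\sigma)$, $\mathrm{rej}(\sigma)$ are the sets of matches proposed/rejected in $\sigma$ and $\mathrm{tent}(\sigma)=\mathrm{prop}(\sigma)\setminus\mathrm{rej}(\sigma)$. A match $(r,h)\in M$ is ousted from $M$ in $I$ if the list of $h$ in $I$ contains at least $q_h$ residents of $\mathrm{res}_h M$ and either $r$ is not on it or $r$ is preceded on it by at least $q_h$ residents of $\mathrm{res}_h M$. $I$-feasible sequences: the empty sequence is $I$-feasible; if $\sigma$ is $I$-feasible then $\sigma+(r,h)^+$ is $I$-feasible if $r\notin\mathrm{res}\,\mathrm{tent}(\sigma)$, $(r,h)\notin\mathrm{prop}(\sigma)$,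 $h$ is on the list of $r$ in $I$ and $(r,h')\in\mathrm{rej}(\sigma)$ for every $h'$ preceding $h$ on it; and $\sigma+(r,h)^-$ is $I$-feasible if $(r,h)$ is ousted from $\mathrm{prop}(\sigma)$ in $I$ and $(r,h)\notin\mathrm{rej}(\sigma)$. All maximal $I$-feasible sequences contain the same events; $\mathrm{prop}(I),\mathrm{rej}(I)$ denote $\mathrm{prop}(\sigma),\mathrm{rej}(\sigma)$ for any maximal $I$-feasible $\sigma$. $I$ is resident-minimal if $\mathrm{prop}(I)$ equals the set of matches $(r,h)$ with $h$ on the list of $r$ in $I$. An extension $J$ of $I$ is simple if $(\mathrm{prop}(J)\setminus\mathrm{prop}(I))\cap(\mathrm{rej}(J)\setminus\mathrm{rej}(I))=\emptyset$. *)

theory Defs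
  imports Main "HOL-Library.Sublist"
begin

text \<open>Instances of the Hospitals/Residents problem. Residents have type 'r, hospitals
type 'h (so R and H are automatically disjoint).\<close>

record ('r, 'h) hr_instance =
  Res   :: "'r set"
  Hosp  :: "'h set"
  quota :: "'h \<Rightarrow> nat"
  rpref :: "'r \<Rightarrow> 'h list"
  hpref :: "'h \<Rightarrow> 'r list"

definition wf_instance :: "('r, 'h) hr_instance \<Rightarrow> bool" where
  "wf_instance I \<longleftrightarrow> finite (Res I) \<and> finite (Hosp I)
     \<and> (\<forall>h\<in>Hosp I. quota I h > 0)
     \<and> (\<forall>r\<in>Res I. distinct (rpref I r) \<and> set (rpref I r) \<subseteq> Hosp I)
     \<and> (\<forall>h\<in>Hosp I. distinct (hpref I h) \<and> set (hpref I h) \<subseteq> Res I)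
     \<and> (\<forall>r. r \<notin> Res I \<longrightarrow> rpref I r = [])
     \<and> (\<forall>h. h \<notin> Hosp I \<longrightarrow> hpref I h = [])"

definition hospital_complete :: "('r, 'h) hr_instance \<Rightarrow> bool" where
  "hospital_complete I \<longleftrightarrow> (\<forall>h\<in>Hosp I. set (hpref I h) = Res I)"

definition res_h :: "('r \<times> 'h) set \<Rightarrow> 'h \<Rightarrow> 'r set" where
  "res_h M h = {r. (r, h) \<in> M}"

definition res :: "('r \<times> 'h) set \<Rightarrow> 'r set" where
  "res M = {r. \<exists>h. (r, h) \<in> M}"

definition is_extension :: "('r, 'h) hr_instance \<Rightarrow> ('r, 'h) hr_instance \<Rightarrow> bool" where
  "is_extension I J \<longleftrightarrow> wf_instance J \<and> Res J = Res I \<and> Hosp J = Hosp I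
     \<and> (\<forall>h\<in>Hosp I. quota J h = quota I h)
     \<and> (\<forall>r\<in>Res I. prefix (rpref I r) (rpref J r))
     \<and> (\<forall>h\<in>Hosp I. prefix (hpref I h) (hpref J h))"

datatype ('r, 'h) event = Propose 'r 'h | Reject 'r 'h

definition props :: "('r, 'h) event list \<Rightarrow> ('r \<times> 'h) set" where
  "props \<sigma> = {(r, h). Propose r h \<in> set \<sigma>}"

definition rejs :: "('r, 'h) event list \<Rightarrow> ('r \<times> 'h) set" where
  "rejs \<sigma> = {(r, h). Reject r h \<in> set \<sigma>}"

definition tent :: "('r, 'h) event list \<Rightarrow> ('r \<times> 'h) set" where
  "tent \<sigma> = props \<sigma> - rejs \<sigma>"

definition ousted :: "('r, 'h) hr_instance \<Rightarrow> ('r \<times> 'h) set \<Rightarrow> 'r \<Rightarrow> 'h \<Rightarrow> bool" where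
  "ousted I M r h \<longleftrightarrow> (r, h) \<in> M
     \<and> card (set (hpref I h) \<inter> res_h M h) \<ge> quota I h
     \<and> (r \<notin> set (hpref I h)
        \<or> card (set (takeWhile (\<lambda>x. x \<noteq> r) (hpref I h)) \<inter> res_h M h) \<ge> quota I h)"

inductive feasible :: "('r, 'h) hr_instance \<Rightarrow> ('r, 'h) event list \<Rightarrow> bool"
  for I where
  feasible_Nil: "feasible I []"
| feasible_Prop: "\<lbrakk> feasible I \<sigma>; r \<notin> res (tent \<sigma>); (r, h) \<notin> props \<sigma>;
      h \<in> set (rpref I r);
      \<forall>h'\<in>set (takeWhile (\<lambda>x. x \<noteq> h) (rpref I r)). (r, h') \<in> rejs \<sigma> \<rbrakk>
    \<Longrightarrow> feasible I (\<sigma> @ [Propose r h])"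
| feasible_Rej: "\<lbrakk> feasible I \<sigma>; ousted I (props \<sigma>) r h; (r, h) \<notin> rejs \<sigma> \<rbrakk>
    \<Longrightarrow> feasible I (\<sigma> @ [Reject r h])"

definition maximal_feasible :: "('r, 'h) hr_instance \<Rightarrow> ('r, 'h) event list \<Rightarrow> bool" where
  "maximal_feasible I \<sigma> \<longleftrightarrow> feasible I \<sigma> \<and> \<not> (\<exists>e. feasible I (\<sigma> @ [e]))"

definition propI :: "('r, 'h) hr_instance \<Rightarrow> ('r \<times> 'h) set" where
  "propI I = props (SOME \<sigma>. maximal_feasible I \<sigma>)"

definition rejI :: "('r, 'h) hr_instance \<Rightarrow> ('r \<times> 'h) set" where
  "rejI I = rejs (SOME \<sigma>. maximal_feasible I \<sigma>)"

definition resident_minimal :: "('r, 'h) hr_instance \<Rightarrow> bool" where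
  "resident_minimal I \<longleftrightarrow> propI I = {(r, h). r \<in> Res I \<and> h \<in> set (rpref I r)}"

definition simple_extension :: "('r, 'h) hr_instance \<Rightarrow> ('r, 'h) hr_instance \<Rightarrow> bool" where
  "simple_extension I J \<longleftrightarrow> is_extension I J
     \<and> (propI J - propI I) \<inter> (rejI J - rejI I) = {}"

end

theory Submission
  imports Defs
begin

text \<open>Let \<open>S\<close> consist of the matches of \<open>I\<close> together with the proposals of \<open>J\<close> whose
hospital already ranks the resident in \<open>J\<close>. Restricting the residents' lists of \<open>J\<close> to \<open>S\<close>
and completing the hospitals' lists arbitrarily gives a hospital-complete extension \<open>K\<close>.
Every rejection of \<open>J\<close> is a match of \<open>I\<close> (by simplicity and resident-minimality), so deleting
the proposals outside \<open>S\<close> from a \<open>J\<close>-feasible sequence leaves a \<open>K\<close>-feasible one: hence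
\<open>rej(J) \<subseteq> rej(K)\<close>. Conversely \<open>K\<close> proposes only inside \<open>S \<subseteq> prop(J)\<close>, and appending
residents to a hospital's list cannot oust a resident already on it, so \<open>K\<close> rejects a new
match only if \<open>J\<close> did; simplicity of \<open>J\<close> forbids that.\<close>

definition acceptable_pairs :: "('r, 'h) hr_instance \<Rightarrow> ('r \<times> 'h) set" where
  "acceptable_pairs X = {(r, h). h \<in> set (rpref X r)}"

lemma props_append [simp]: "props (xs @ ys) = props xs \<union> props ys"
  by (auto simp: props_def)

lemma rejs_append [simp]: "rejs (xs @ ys) = rejs xs \<union> rejs ys"
  by (auto simp: rejs_def)

lemma props_simps [simp]:
  "props [] = {}" "props [Propose r h] = {(r, h)}" "props [Reject r h] = {}"
  by (auto simp: props_def)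

lemma rejs_simps [simp]:
  "rejs [] = {}" "rejs [Propose r h] = {}" "rejs [Reject r h] = {(r, h)}"
  by (auto simp: rejs_def)

lemma takeWhile_neq_total:
  assumes "x \<in> set xs" "y \<in> set xs" "x \<noteq> y"
  shows "x \<in> set (takeWhile (\<lambda>z. z \<noteq> y) xs) \<or> y \<in> set (takeWhile (\<lambda>z. z \<noteq> x) xs)"
  using assms
proof (induction xs)
  case (Cons a xs)
  show ?case
  proof (cases "a = x \<or> a = y")
    case True
    then show ?thesis using Cons.prems(3) by (elim disjE) simp_all
  next
    case False
    then show ?thesis using Cons by auto
  qed
qed simp

lemma takeWhile_neq_append_notin:
  "r \<notin> set xs \<Longrightarrow> takeWhile (\<lambda>x. x \<noteq> r) (xs @ ys) = xs @ takeWhile (\<lambda>x. x \<noteq> r) ys"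
  by (induction xs) auto

lemma takeWhile_neq_filter:
  "P h \<Longrightarrow> x \<in> set (takeWhile (\<lambda>z. z \<noteq> h) (filter P xs))
    \<Longrightarrow> x \<in> set (takeWhile (\<lambda>z. z \<noteq> h) xs)"
  by (induction xs) (auto split: if_splits)

subsection \<open>Ousting under changes of the list and of the proposal set\<close>

lemma ousted_extend:
  assumes "ousted A M r h" "(r, h) \<in> M'"
    and "prefix (hpref A h) (hpref B h)" "quota B h = quota A h"
    and "set (hpref A h) \<inter> res_h M h \<subseteq> res_h M' h"
  shows "ousted B M' r h"
proof -
  obtain Z where Z: "hpref B h = hpref A h @ Z" using assms(3) prefixE by blast
  let ?L = "hpref A h"
  have full: "card (set ?L \<inter> res_h M h) \<le> card (set ?L \<inter> res_h M' h)"
    using assms(5) by (intro card_mono) auto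
  have full_B: "card (set ?L \<inter> res_h M' h) \<le> card (set (hpref B h) \<inter> res_h M' h)"
    by (intro card_mono) (auto simp: Z)
  have quota: "quota A h \<le> card (set ?L \<inter> res_h M h)"
    and before: "r \<notin> set ?L \<or> quota A h \<le> card (set (takeWhile (\<lambda>x. x \<noteq> r) ?L) \<inter> res_h M h)"
    using assms(1) by (auto simp: ousted_def)
  have "r \<notin> set (hpref B h)
      \<or> quota B h \<le> card (set (takeWhile (\<lambda>x. x \<noteq> r) (hpref B h)) \<inter> res_h M' h)"
  proof (cases "r \<in> set ?L")
    case True
    then have "takeWhile (\<lambda>x. x \<noteq> r) (hpref B h) = takeWhile (\<lambda>x. x \<noteq> r) ?L"
      by (simp add: Z)
    moreover have "card (set (takeWhile (\<lambda>x. x \<noteq> r) ?L) \<inter> res_h M h)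
        \<le> card (set (takeWhile (\<lambda>x. x \<noteq> r) ?L) \<inter> res_h M' h)"
      using assms(5) set_takeWhileD by (intro card_mono) fastforce+
    ultimately show ?thesis using True before assms(4) by auto
  next
    case False
    then have "takeWhile (\<lambda>x. x \<noteq> r) (hpref B h) = ?L @ takeWhile (\<lambda>x. x \<noteq> r) Z"
      unfolding Z by (rule takeWhile_neq_append_notin)
    then have "card (set ?L \<inter> res_h M' h)
        \<le> card (set (takeWhile (\<lambda>x. x \<noteq> r) (hpref B h)) \<inter> res_h M' h)"
      by (intro card_mono) auto
    then show ?thesis using full quota assms(4) by auto
  qed
  then show ?thesis using assms(2,4) full full_B quota by (auto simp: ousted_def)
qed

lemma ousted_restrict:
  assumes "ousted B M r h" "(r, h) \<in> M'"
    and "prefix (hpref A h) (hpref B h)" "quota B h = quota A h"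
    and "r \<in> set (hpref A h)" "res_h M h \<subseteq> res_h M' h"
  shows "ousted A M' r h"
proof -
  obtain Z where Z: "hpref B h = hpref A h @ Z" using assms(3) prefixE by blast
  let ?T = "takeWhile (\<lambda>x. x \<noteq> r) (hpref A h)"
  have "takeWhile (\<lambda>x. x \<noteq> r) (hpref B h) = ?T"
    using assms(5) by (simp add: Z)
  moreover have "r \<in> set (hpref B h)" using assms(5) Z by simp
  ultimately have "quota B h \<le> card (set ?T \<inter> res_h M h)"
    using assms(1) by (simp add: ousted_def)
  also have "\<dots> \<le> card (set ?T \<inter> res_h M' h)"
    using assms(6) by (intro card_mono) auto
  finally have "quota B h \<le> card (set ?T \<inter> res_h M' h)" .
  moreover have "card (set ?T \<inter> res_h M' h) \<le> card (set (hpref A h) \<inter> res_h M' h)"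
    by (intro card_mono) (auto dest: set_takeWhileD)
  ultimately show ?thesis using assms(2,4,5) by (auto simp: ousted_def)
qed

subsection \<open>Feasible sequences\<close>

lemma feasible_props_acceptable: "feasible X \<tau> \<Longrightarrow> props \<tau> \<subseteq> acceptable_pairs X"
  by (induction rule: feasible.induct) (auto simp: acceptable_pairs_def)

lemma feasible_rejs_props: "feasible X \<tau> \<Longrightarrow> rejs \<tau> \<subseteq> props \<tau>"
  by (induction rule: feasible.induct) (auto simp: ousted_def)

lemma feasible_proposal_after_rejections:
  "feasible X \<tau> \<Longrightarrow> (r, h) \<in> props \<tau>
    \<Longrightarrow> h' \<in> set (takeWhile (\<lambda>x. x \<noteq> h) (rpref X r)) \<Longrightarrow> (r, h') \<in> rejs \<tau>"
  by (induction arbitrary: r h h' rule: feasible.induct) auto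

lemma feasible_distinct: "feasible X \<tau> \<Longrightarrow> distinct \<tau>"
  by (induction rule: feasible.induct) (auto simp: props_def rejs_def)

lemma finite_acceptable_pairs:
  assumes "wf_instance X" shows "finite (acceptable_pairs X)"
proof (rule finite_subset)
  show "acceptable_pairs X \<subseteq> Res X \<times> Hosp X"
    using assms unfolding wf_instance_def acceptable_pairs_def by force
  show "finite (Res X \<times> Hosp X)" using assms by (simp add: wf_instance_def)
qed

lemma feasible_length_bounded:
  assumes "wf_instance X"
  obtains n where "\<And>\<tau>. feasible X \<tau> \<Longrightarrow> length \<tau> \<le> n"
proof
  define E where "E = (\<lambda>(r, h). Propose r h) ` acceptable_pairs X
    \<union> (\<lambda>(r, h). Reject r h) ` acceptable_pairs X"
  fix \<tau> assume f: "feasible X \<tau>"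
  have "set \<tau> \<subseteq> E"
  proof
    fix e assume e: "e \<in> set \<tau>"
    show "e \<in> E"
    proof (cases e)
      case (Propose r h)
      then show ?thesis using e feasible_props_acceptable[OF f]
        by (auto simp: E_def props_def)
    next
      case (Reject r h)
      then show ?thesis using e feasible_props_acceptable[OF f] feasible_rejs_props[OF f]
        by (auto simp: E_def rejs_def)
    qed
  qed
  then have "card (set \<tau>) \<le> card E"
    using finite_acceptable_pairs[OF assms] by (intro card_mono) (auto simp: E_def)
  then show "length \<tau> \<le> card E" using feasible_distinct[OF f] by (simp add: distinct_card)
qed

lemma exists_maximal_feasible:
  assumes "wf_instance X" shows "\<exists>\<sigma>. maximal_feasible X \<sigma>"
proof -
  obtain n where bound: "\<And>\<tau>. feasible X \<tau> \<Longrightarrow> length \<tau> \<le> n"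
    using feasible_length_bounded[OF assms] by blast
  define L where "L = {length \<tau> | \<tau>. feasible X \<tau>}"
  have "finite L" using bound by (intro finite_subset[of L "{..n}"]) (auto simp: L_def)
  moreover have "0 \<in> L" unfolding L_def using feasible_Nil by force
  ultimately have "Max L \<in> L" by (intro Max_in) auto
  then obtain \<tau> where \<tau>: "feasible X \<tau>" "length \<tau> = Max L" by (auto simp: L_def)
  have "\<not> feasible X (\<tau> @ [e])" for e
  proof
    assume "feasible X (\<tau> @ [e])"
    then have "length \<tau> + 1 \<in> L" by (force simp: L_def)
    then have "length \<tau> + 1 \<le> Max L" using \<open>finite L\<close> by simp
    then show False using \<tau>(2) by simp
  qed
  then show ?thesis using \<tau>(1) by (auto simp: maximal_feasible_def)
qed

lemma maximal_feasible_proposes: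
  assumes max: "maximal_feasible B \<sigma>" and h: "h \<in> set (rpref B r)"
    and before: "\<forall>h'\<in>set (takeWhile (\<lambda>x. x \<noteq> h) (rpref B r)). (r, h') \<in> rejs \<sigma>"
  shows "(r, h) \<in> props \<sigma>"
proof (rule ccontr)
  assume not_prop: "(r, h) \<notin> props \<sigma>"
  have f: "feasible B \<sigma>" and stuck: "\<not> feasible B (\<sigma> @ [Propose r h])"
    using max by (auto simp: maximal_feasible_def)
  have "r \<in> res (tent \<sigma>)"
  proof (rule ccontr)
    assume "r \<notin> res (tent \<sigma>)"
    then show False using feasible_Prop[OF f _ not_prop h before] stuck by blast
  qed
  then obtain h0 where h0: "(r, h0) \<in> props \<sigma>" "(r, h0) \<notin> rejs \<sigma>"
    by (auto simp: res_def tent_def)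
  have "h0 \<in> set (rpref B r)" using h0(1) feasible_props_acceptable[OF f]
    by (auto simp: acceptable_pairs_def)
  moreover have "h \<noteq> h0" using not_prop h0 by auto
  \<comment> \<open>whichever of \<open>h\<close>, \<open>h0\<close> comes first in \<open>r\<close>'s list must already have rejected \<open>r\<close>\<close>
  ultimately consider "h \<in> set (takeWhile (\<lambda>z. z \<noteq> h0) (rpref B r))"
    | "h0 \<in> set (takeWhile (\<lambda>z. z \<noteq> h) (rpref B r))"
    using takeWhile_neq_total[OF h] by metis
  then show False
  proof cases
    case 1
    then have "(r, h) \<in> rejs \<sigma>" by (rule feasible_proposal_after_rejections[OF f h0(1)])
    then show False using feasible_rejs_props[OF f] not_prop by blast
  next
    case 2
    then show False using before h0(2) by blast
  qed
qed

lemma maximal_feasible_rejects: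
  assumes "maximal_feasible B \<sigma>" "ousted B (props \<sigma>) r h"
  shows "(r, h) \<in> rejs \<sigma>"
  using assms feasible_Rej[of B \<sigma> r h] by (auto simp: maximal_feasible_def)

lemma feasible_events_in_maximal:
  assumes rpref: "\<And>r. prefix (rpref A r) (rpref B r)"
    and hpref: "\<And>h. prefix (hpref A h) (hpref B h)"
    and quota: "\<And>r h. h \<in> set (rpref A r) \<Longrightarrow> quota B h = quota A h"
    and max: "maximal_feasible B \<sigma>"
  shows "feasible A \<tau> \<Longrightarrow> props \<tau> \<subseteq> props \<sigma> \<and> rejs \<tau> \<subseteq> rejs \<sigma>"
proof (induction rule: feasible.induct)
  case feasible_Nil
  then show ?case by simp
next
  case (feasible_Prop \<tau> r h)
  obtain Z where Z: "rpref B r = rpref A r @ Z" using rpref prefixE by blast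
  have "takeWhile (\<lambda>x. x \<noteq> h) (rpref B r) = takeWhile (\<lambda>x. x \<noteq> h) (rpref A r)"
    using feasible_Prop(4) Z by simp
  then have "\<forall>h'\<in>set (takeWhile (\<lambda>x. x \<noteq> h) (rpref B r)). (r, h') \<in> rejs \<sigma>"
    using feasible_Prop(5,6) by auto
  then have "(r, h) \<in> props \<sigma>"
    using maximal_feasible_proposes[OF max] feasible_Prop(4) Z by simp
  then show ?case using feasible_Prop(6) by simp
next
  case (feasible_Rej \<tau> r h)
  have "(r, h) \<in> props \<tau>" using feasible_Rej(2) by (simp add: ousted_def)
  then have "h \<in> set (rpref A r)"
    using feasible_props_acceptable[OF feasible_Rej(1)] by (auto simp: acceptable_pairs_def)
  then have "ousted B (props \<sigma>) r h"
    using ousted_extend[OF feasible_Rej(2) _ hpref quota] \<open>(r, h) \<in> props \<tau>\<close> feasible_Rej(4)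
    by (auto simp: res_h_def)
  then show ?case using maximal_feasible_rejects[OF max] feasible_Rej(4) by simp
qed

lemma feasible_events_in_maximal_self:
  "maximal_feasible X \<sigma> \<Longrightarrow> feasible X \<tau> \<Longrightarrow> props \<tau> \<subseteq> props \<sigma> \<and> rejs \<tau> \<subseteq> rejs \<sigma>"
  by (rule feasible_events_in_maximal) simp_all

lemma maximal_feasible_propI_rejI:
  assumes "maximal_feasible X \<sigma>"
  shows "propI X = props \<sigma>" "rejI X = rejs \<sigma>"
proof -
  define \<sigma>0 where "\<sigma>0 = (SOME \<sigma>. maximal_feasible X \<sigma>)"
  have "maximal_feasible X \<sigma>0" unfolding \<sigma>0_def using assms by (rule someI)
  then have "props \<sigma>0 = props \<sigma> \<and> rejs \<sigma>0 = rejs \<sigma>"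
    using feasible_events_in_maximal_self[of X \<sigma>0 \<sigma>] feasible_events_in_maximal_self[of X \<sigma> \<sigma>0]
      assms by (auto simp: maximal_feasible_def)
  then show "propI X = props \<sigma>" "rejI X = rejs \<sigma>"
    by (auto simp: propI_def rejI_def \<sigma>0_def[symmetric])
qed

lemma feasible_events_in_propI_rejI:
  assumes "wf_instance X" "feasible X \<tau>"
  shows "props \<tau> \<subseteq> propI X" "rejs \<tau> \<subseteq> rejI X"
  using exists_maximal_feasible[OF assms(1)] feasible_events_in_maximal_self[OF _ assms(2)]
    maximal_feasible_propI_rejI by blast+

lemma rejI_subset_propI: "wf_instance X \<Longrightarrow> rejI X \<subseteq> propI X"
  using exists_maximal_feasible feasible_rejs_props maximal_feasible_propI_rejI
  by (metis maximal_feasible_def)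

lemma propI_subset_acceptable_pairs: "wf_instance X \<Longrightarrow> propI X \<subseteq> acceptable_pairs X"
  using exists_maximal_feasible feasible_props_acceptable maximal_feasible_propI_rejI(1)
  by (metis maximal_feasible_def)

lemma resident_minimal_propI:
  assumes "wf_instance I" "resident_minimal I"
  shows "propI I = acceptable_pairs I"
  using assms unfolding resident_minimal_def acceptable_pairs_def wf_instance_def by force

lemma extension_rpref_prefix:
  "wf_instance I \<Longrightarrow> is_extension I J \<Longrightarrow> prefix (rpref I r) (rpref J r)"
  by (cases "r \<in> Res I") (auto simp: is_extension_def wf_instance_def)

lemma extension_hpref_prefix:
  "wf_instance I \<Longrightarrow> is_extension I J \<Longrightarrow> prefix (hpref I h) (hpref J h)"
  by (cases "h \<in> Hosp I") (auto simp: is_extension_def wf_instance_def)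

lemma extension_propI_mono:
  assumes "wf_instance I" "is_extension I J"
  shows "propI I \<subseteq> propI J"
proof -
  have wJ: "wf_instance J" using assms(2) by (simp add: is_extension_def)
  obtain \<sigma>I \<sigma>J where "maximal_feasible I \<sigma>I" "maximal_feasible J \<sigma>J"
    using exists_maximal_feasible assms(1) wJ by blast
  moreover have "quota J h = quota I h" if "h \<in> set (rpref I r)" for r h
  proof -
    have "r \<in> Res I" using that assms(1) by (auto simp: wf_instance_def)
    then have "h \<in> Hosp I" using that assms(1) by (auto simp: wf_instance_def)
    then show ?thesis using assms(2) by (simp add: is_extension_def)
  qed
  ultimately show ?thesis
    using feasible_events_in_maximal[OF extension_rpref_prefix[OF assms]
        extension_hpref_prefix[OF assms]] maximal_feasible_propI_rejI(1)
    by (metis maximal_feasible_def)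
qed

subsection \<open>Restricting residents' lists and completing hospitals' lists\<close>

definition complete_list :: "'a set \<Rightarrow> 'a list \<Rightarrow> 'a list" where
  "complete_list A xs = xs @ (SOME ys. distinct ys \<and> set ys = A - set xs)"

lemma complete_list_correct:
  assumes "finite A" "distinct xs" "set xs \<subseteq> A"
  shows "distinct (complete_list A xs)" "set (complete_list A xs) = A"
    "prefix xs (complete_list A xs)"
proof -
  let ?ys = "SOME ys. distinct ys \<and> set ys = A - set xs"
  have "distinct ?ys \<and> set ?ys = A - set xs"
    by (rule someI_ex) (use assms(1) finite_distinct_list in blast)
  then show "distinct (complete_list A xs)" "set (complete_list A xs) = A"
    "prefix xs (complete_list A xs)"
    using assms by (auto simp: complete_list_def)
qed

definition completion :: "('r, 'h) hr_instance \<Rightarrow> ('r \<times> 'h) set \<Rightarrow> ('r, 'h) hr_instance" where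
  "completion J S = J\<lparr>rpref := (\<lambda>r. filter (\<lambda>h. (r, h) \<in> S) (rpref J r)),
     hpref := (\<lambda>h. if h \<in> Hosp J then complete_list (Res J) (hpref J h) else [])\<rparr>"

lemma completion_simps [simp]:
  "Res (completion J S) = Res J" "Hosp (completion J S) = Hosp J"
  "quota (completion J S) = quota J"
  "rpref (completion J S) r = filter (\<lambda>h. (r, h) \<in> S) (rpref J r)"
  "hpref (completion J S) h = (if h \<in> Hosp J then complete_list (Res J) (hpref J h) else [])"
  by (simp_all add: completion_def)

lemma acceptable_pairs_completion: "acceptable_pairs (completion J S) \<subseteq> S"
  by (auto simp: acceptable_pairs_def)

lemma completion_hpref_prefix:
  "wf_instance J \<Longrightarrow> prefix (hpref J h) (hpref (completion J S) h)"
  by (auto simp: wf_instance_def complete_list_correct)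

lemma completion_wf_hospital_complete:
  assumes "wf_instance J"
  shows "wf_instance (completion J S)" "hospital_complete (completion J S)"
  using assms complete_list_correct[of "Res J"]
  unfolding wf_instance_def hospital_complete_def completion_simps by auto

lemma completion_extension:
  assumes "wf_instance I" "is_extension I J" "acceptable_pairs I \<subseteq> S"
  shows "is_extension I (completion J S)"
proof -
  have wJ: "wf_instance J" using assms(2) by (simp add: is_extension_def)
  have "prefix (rpref I r) (rpref (completion J S) r)" for r
  proof -
    obtain Z where "rpref J r = rpref I r @ Z"
      using extension_rpref_prefix[OF assms(1,2)] prefixE by blast
    moreover have "filter (\<lambda>h. (r, h) \<in> S) (rpref I r) = rpref I r"
      using assms(3) by (auto simp: acceptable_pairs_def filter_id_conv)
    ultimately show ?thesis by simp
  qed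
  moreover have "prefix (hpref I h) (hpref (completion J S) h)" for h
    using extension_hpref_prefix[OF assms(1,2)] completion_hpref_prefix[OF wJ]
    by (rule prefix_order.trans)
  ultimately show ?thesis
    using completion_wf_hospital_complete(1)[OF wJ] assms(2)
    unfolding is_extension_def completion_simps(1-3) by blast
qed

definition restrict_proposals :: "('r \<times> 'h) set \<Rightarrow> ('r, 'h) event list \<Rightarrow> ('r, 'h) event list" where
  "restrict_proposals S = filter (\<lambda>e. case e of Propose r h \<Rightarrow> (r, h) \<in> S | Reject r h \<Rightarrow> True)"

lemma props_restrict_proposals [simp]: "props (restrict_proposals S \<tau>) = props \<tau> \<inter> S"
  by (auto simp: props_def restrict_proposals_def)

lemma rejs_restrict_proposals [simp]: "rejs (restrict_proposals S \<tau>) = rejs \<tau>"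
  by (auto simp: rejs_def restrict_proposals_def)

lemma restrict_proposals_Nil [simp]: "restrict_proposals S [] = []"
  by (simp add: restrict_proposals_def)

lemma restrict_proposals_snoc [simp]:
  "restrict_proposals S (\<tau> @ [Propose r h])
     = (if (r, h) \<in> S then restrict_proposals S \<tau> @ [Propose r h] else restrict_proposals S \<tau>)"
  "restrict_proposals S (\<tau> @ [Reject r h]) = restrict_proposals S \<tau> @ [Reject r h]"
  by (simp_all add: restrict_proposals_def)

text \<open>The hypotheses say that deleting the proposals outside \<open>S\<close> never removes a rejected
match, nor a resident counted by a hospital that ranks him in \<open>J\<close>.\<close>

lemma feasible_completion:
  assumes wJ: "wf_instance J" and rej: "rejI J \<subseteq> S"
    and ranked: "\<And>r h. (r, h) \<in> propI J \<Longrightarrow> r \<in> set (hpref J h) \<Longrightarrow> (r, h) \<in> S"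
  shows "feasible J \<tau> \<Longrightarrow> feasible (completion J S) (restrict_proposals S \<tau>)"
proof (induction rule: feasible.induct)
  case feasible_Nil
  then show ?case by (simp add: feasible.feasible_Nil)
next
  case (feasible_Prop \<tau> r h)
  show ?case
  proof (cases "(r, h) \<in> S")
    case True
    have "tent (restrict_proposals S \<tau>) \<subseteq> tent \<tau>" by (auto simp: tent_def)
    then have "r \<notin> res (tent (restrict_proposals S \<tau>))"
      using feasible_Prop(2) by (auto simp: res_def)
    moreover have "\<forall>h'\<in>set (takeWhile (\<lambda>x. x \<noteq> h) (rpref (completion J S) r)).
        (r, h') \<in> rejs (restrict_proposals S \<tau>)"
      using feasible_Prop(5) takeWhile_neq_filter[of "\<lambda>h. (r, h) \<in> S", OF True] by auto
    ultimately show ?thesis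
      using True feasible_Prop by (auto intro: feasible.feasible_Prop)
  qed (use feasible_Prop(6) in simp)
next
  case (feasible_Rej \<tau> r h)
  have "(r, h) \<in> rejI J"
    using feasible_events_in_propI_rejI(2)[OF wJ feasible.feasible_Rej[OF feasible_Rej(1-3)]]
    by simp
  then have "(r, h) \<in> props \<tau> \<inter> S" using rej feasible_Rej(2) by (auto simp: ousted_def)
  moreover have "set (hpref J h) \<inter> res_h (props \<tau>) h \<subseteq> res_h (props \<tau> \<inter> S) h"
    using feasible_events_in_propI_rejI(1)[OF wJ feasible_Rej(1)] ranked
    by (auto simp: res_h_def)
  ultimately have "ousted (completion J S) (props \<tau> \<inter> S) r h"
    using ousted_extend[OF feasible_Rej(2) _ completion_hpref_prefix[OF wJ]] by simp
  then show ?case using feasible_Rej(3,4) by (simp add: feasible.feasible_Rej)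
qed

lemma rejI_subset_completion:
  assumes "wf_instance J" "rejI J \<subseteq> S"
    and "\<And>r h. (r, h) \<in> propI J \<Longrightarrow> r \<in> set (hpref J h) \<Longrightarrow> (r, h) \<in> S"
  shows "rejI J \<subseteq> rejI (completion J S)"
proof -
  obtain \<sigma> where \<sigma>: "maximal_feasible J \<sigma>" using exists_maximal_feasible assms(1) by blast
  then have "feasible (completion J S) (restrict_proposals S \<sigma>)"
    using feasible_completion[OF assms] by (simp add: maximal_feasible_def)
  then show ?thesis
    using feasible_events_in_propI_rejI(2) completion_wf_hospital_complete(1)[OF assms(1)]
      maximal_feasible_propI_rejI(2)[OF \<sigma>] by fastforce
qed

lemma completion_rejI_ranked:
  assumes wJ: "wf_instance J" and S: "S \<subseteq> propI J"
    and "(r, h) \<in> rejI (completion J S)" "r \<in> set (hpref J h)"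
  shows "(r, h) \<in> rejI J"
proof -
  obtain \<sigma> where \<sigma>: "maximal_feasible J \<sigma>" using exists_maximal_feasible wJ by blast
  have props_in_\<sigma>: "props \<tau> \<subseteq> props \<sigma>" if "feasible (completion J S) \<tau>" for \<tau>
    using feasible_props_acceptable[OF that] acceptable_pairs_completion S
      maximal_feasible_propI_rejI(1)[OF \<sigma>] by blast
  have "\<forall>(r, h)\<in>rejs \<tau>. r \<in> set (hpref J h) \<longrightarrow> (r, h) \<in> rejs \<sigma>"
    if "feasible (completion J S) \<tau>" for \<tau>
    using that
  proof (induction rule: feasible.induct)
    case (feasible_Rej \<tau> r h)
    have "ousted J (props \<sigma>) r h" if "r \<in> set (hpref J h)"
    proof (rule ousted_restrict[OF feasible_Rej(2) _ completion_hpref_prefix[OF wJ] _ that])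
      show "(r, h) \<in> props \<sigma>" "res_h (props \<tau>) h \<subseteq> res_h (props \<sigma>) h"
        using props_in_\<sigma>[OF feasible_Rej(1)] feasible_Rej(2) by (auto simp: ousted_def res_h_def)
    qed simp
    then show ?case using feasible_Rej.IH maximal_feasible_rejects[OF \<sigma>] by auto
  qed auto
  moreover obtain \<sigma>K where "maximal_feasible (completion J S) \<sigma>K"
    using exists_maximal_feasible completion_wf_hospital_complete(1)[OF wJ] by blast
  ultimately show ?thesis
    using assms(3,4) maximal_feasible_propI_rejI \<sigma> unfolding maximal_feasible_def by blast
qed

theorem proposition5:
  fixes I J :: "('r, 'h) hr_instance"
  assumes "wf_instance I"
    and "resident_minimal I"
    and "simple_extension I J"
  shows "\<exists>J'. simple_extension I J' \<and> hospital_complete J' \<and> rejI J \<subseteq> rejI J'"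
proof -
  have ext: "is_extension I J" and simple: "(propI J - propI I) \<inter> (rejI J - rejI I) = {}"
    using assms(3) by (auto simp: simple_extension_def)
  have wJ: "wf_instance J" using ext by (simp add: is_extension_def)
  have PI: "propI I = acceptable_pairs I" by (rule resident_minimal_propI[OF assms(1,2)])
  have rejJ: "rejI J \<subseteq> propI I"
    using rejI_subset_propI[OF wJ] rejI_subset_propI[OF assms(1)] simple by blast
  define S where "S = propI I \<union> {(r, h). (r, h) \<in> propI J \<and> r \<in> set (hpref J h)}"
  define K where "K = completion J S"
  have "S \<subseteq> propI J" using extension_propI_mono[OF assms(1) ext] by (auto simp: S_def)
  have "propI K \<subseteq> S"
    using propI_subset_acceptable_pairs[OF completion_wf_hospital_complete(1)[OF wJ, of S]]
      acceptable_pairs_completion[of J S] by (simp add: K_def)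
  moreover have "(r, h) \<notin> rejI K" if "(r, h) \<in> S - propI I" for r h
  proof
    assume "(r, h) \<in> rejI K"
    then have "(r, h) \<in> rejI J"
      using completion_rejI_ranked[OF wJ \<open>S \<subseteq> propI J\<close>] that by (auto simp: S_def K_def)
    then show False using that simple rejI_subset_propI[OF assms(1)] by (auto simp: S_def)
  qed
  ultimately have "(propI K - propI I) \<inter> (rejI K - rejI I) = {}" by auto
  moreover have "is_extension I K"
    unfolding K_def using PI by (intro completion_extension[OF assms(1) ext]) (auto simp: S_def)
  moreover have "rejI J \<subseteq> rejI K"
    unfolding K_def using rejJ by (intro rejI_subset_completion[OF wJ]) (auto simp: S_def)
  ultimately show ?thesis
    using completion_wf_hospital_complete(2)[OF wJ] by (auto simp: simple_extension_def K_def)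
qed

end
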